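(* Let $\mathcal A\subseteq\mathbb T$, let $\Phi:\mathcal A\to\mathcal A$ be a function, and let $\boldsymbol\alpha$ be a ratio set. Assume: (a) if $\boldsymbol\alpha$ witnesses $S\in\mathcal A$, then $\boldsymbol\alpha$ witnesses $\Phi(S)$; (b) if $S,T\in\mathcal A$ and $\boldsymbol\alpha$ witnesses $S-T$, then $\boldsymbol\alpha$ witnesses $\Phi(S)-\Phi(T)$ and $S-T\succ^{\boldsymbol\alpha}\Phi(S)-\Phi(T)$; (c) if $T_j\in\mathcal A$ ($j=1,2,\dots$) and $T_j$ converges $\boldsymbol\alpha$-geometrically to $T$, then $T\in\mathcal A$; (d) there exists $T_0\in\mathcal A$ such that $\boldsymbol\alpha$ witnesses both $T_0$ and $\Phi(T_0)-T_0$. Then there is $S\in\mathcal A$ with $S=\Phi(S)$.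
   Context: $\mathbb T$ is the field of real grid-based transseries over the ordered group $\mathfrak G$ of transmonomials; $\operatorname{mag}T$ is the dominant monomial of $T\neq0$. A ratio set is a finite $\boldsymbol\alpha\subset\{\mathfrak g\in\mathfrak G:\mathfrak g\prec1\}$; $\boldsymbol\alpha^*$ (resp. $\boldsymbol\alpha^+$) is the set of products of zero or more (resp. one or more) elements of $\boldsymbol\alpha$. For monomials $\mathfrak m\prec^{\boldsymbol\alpha}\mathfrak n$ iff $\mathfrak m/\mathfrak n\in\boldsymbol\alpha^+$; for transseries $A\prec^{\boldsymbol\alpha}B$ (equivalently $B\succ^{\boldsymbol\alpha}A$) iff every $\mathfrak a\in\operatorname{supp}A$ satisfies $\mathfrak a\prec^{\boldsymbol\alpha}\mathfrak b$ for some $\mathfrak b\in\operatorname{supp}B$. $\boldsymbol\alpha$ witnesses a nonzero $T$ iff $\operatorname{supp}T\subseteq(\operatorname{mag}T)\boldsymbol\alpha^*$. A sequence $T_j$ converges $\boldsymbol\alpha$-geometrically to $T$ if for all $j$, $\boldsymbol\alpha$ witnesses $T-T_j$ and $T-T_j\succ^{\boldsymbol\alpha}T-T_{j+1}$. *)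

theory Defs
  imports Complex_Main
begin

text \<open>The monomial group is written additively: the product of monomials m n is m + n,
  the unit monomial 1 is 0, and m \<prec> n is m < n (so "small" monomials are the
  negative elements).\<close>

type_synonym 'g series = "'g \<Rightarrow> real"

definition supp :: "'g series \<Rightarrow> 'g set" where
  "supp T = {g. T g \<noteq> 0}"

definition mstar :: "'g::comm_monoid_add set \<Rightarrow> 'g set" where
  "mstar \<alpha> = {sum_list xs | xs. set xs \<subseteq> \<alpha>}"

definition mplus :: "'g::comm_monoid_add set \<Rightarrow> 'g set" where
  "mplus \<alpha> = {sum_list xs | xs. xs \<noteq> [] \<and> set xs \<subseteq> \<alpha>}"

definition grid_based :: "'g::linordered_ab_group_add series \<Rightarrow> bool" where
  "grid_based T \<longleftrightarrow> (\<exists>\<mu> m. finite \<mu> \<and> (\<forall>x\<in>\<mu>. x < 0) \<and>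
      supp T \<subseteq> {m + s | s. s \<in> mstar \<mu>})"

definition mag :: "'g::linorder series \<Rightarrow> 'g" where
  "mag T = (GREATEST g. g \<in> supp T)"

definition ratio_set :: "'g::linordered_ab_group_add set \<Rightarrow> bool" where
  "ratio_set \<alpha> \<longleftrightarrow> finite \<alpha> \<and> (\<forall>g\<in>\<alpha>. g < 0)"

definition mono_prec :: "'g::ab_group_add set \<Rightarrow> 'g \<Rightarrow> 'g \<Rightarrow> bool" where
  "mono_prec \<alpha> m n \<longleftrightarrow> m - n \<in> mplus \<alpha>"

definition ser_prec :: "'g::ab_group_add set \<Rightarrow> 'g series \<Rightarrow> 'g series \<Rightarrow> bool" where
  "ser_prec \<alpha> A B \<longleftrightarrow> (\<forall>a\<in>supp A. \<exists>b\<in>supp B. mono_prec \<alpha> a b)"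

definition witnesses :: "'g::linordered_ab_group_add set \<Rightarrow> 'g series \<Rightarrow> bool" where
  "witnesses \<alpha> T \<longleftrightarrow> T \<noteq> (\<lambda>_. 0) \<and> supp T \<subseteq> {mag T + s | s. s \<in> mstar \<alpha>}"

definition geom_conv :: "'g::linordered_ab_group_add set \<Rightarrow> (nat \<Rightarrow> 'g series) \<Rightarrow> 'g series \<Rightarrow> bool" where
  "geom_conv \<alpha> Ts T \<longleftrightarrow> (\<forall>j. witnesses \<alpha> (T - Ts j) \<and> ser_prec \<alpha> (T - Ts (Suc j)) (T - Ts j))"

end

theory Submission
  imports Defs "HOL-Library.Multiset"
begin

text \<open>Iterate \<Phi> from T0. By (b) the differences D j = \<Phi>^(j+1) T0 - \<Phi>^j T0 form a chain
  in which each term is \<prec>^\<alpha> the previous one, so supp (D j) lies in m \<alpha>^j \<alpha>*, where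
  m = mag (D 0). Since \<alpha> is a finite set of small monomials, Dickson's lemma shows that a fixed
  monomial lies in only finitely many of the sets m \<alpha>^j \<alpha>*. Hence the iterates stabilise
  coefficientwise, and their limit T is approached \<alpha>-geometrically, so T \<in> \<A> by (c).
  Finally \<Phi> T - T lies in m \<alpha>^k \<alpha>* for every k, so it vanishes.\<close>

text \<open>In multiplicative notation, mstar_ge \<alpha> k is \<alpha>^k \<alpha>* and cone \<alpha> k c is c \<alpha>^k \<alpha>*.\<close>

definition mstar_ge :: "'g::comm_monoid_add set \<Rightarrow> nat \<Rightarrow> 'g set" where
  "mstar_ge \<alpha> k = {sum_list xs | xs. set xs \<subseteq> \<alpha> \<and> k \<le> length xs}"

lemma mstar_eq_mstar_ge: "mstar \<alpha> = mstar_ge \<alpha> 0"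
  unfolding mstar_def mstar_ge_def by auto

lemma mplus_eq_mstar_ge: "mplus \<alpha> = mstar_ge \<alpha> 1"
  unfolding mplus_def mstar_ge_def by (auto simp: Suc_le_eq)

lemma mstar_ge_add: "x \<in> mstar_ge \<alpha> k \<Longrightarrow> y \<in> mstar_ge \<alpha> l \<Longrightarrow> x + y \<in> mstar_ge \<alpha> (k + l)"
  unfolding mstar_ge_def by clarify (metis add_mono length_append set_append sum_list_append Un_subset_iff)

lemma mstar_ge_antimono: "k \<le> l \<Longrightarrow> mstar_ge \<alpha> l \<subseteq> mstar_ge \<alpha> k"
  unfolding mstar_ge_def by auto

lemma mstar_ge_nonpos: "ratio_set \<alpha> \<Longrightarrow> x \<in> mstar_ge \<alpha> k \<Longrightarrow> x \<le> 0"
  unfolding mstar_ge_def ratio_set_def by (auto intro!: sum_list_nonpos simp: subset_iff less_imp_le)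

lemma sum_list_neg:
  fixes xs :: "'g::linordered_ab_group_add list"
  shows "xs \<noteq> [] \<Longrightarrow> \<forall>x\<in>set xs. x < 0 \<Longrightarrow> sum_list xs < 0"
  by (induction xs) (auto intro!: add_neg_nonpos sum_list_nonpos simp: less_imp_le)

lemma mstar_ge_neg: "ratio_set \<alpha> \<Longrightarrow> x \<in> mstar_ge \<alpha> k \<Longrightarrow> 0 < k \<Longrightarrow> x < 0"
  unfolding mstar_ge_def ratio_set_def by (force intro!: sum_list_neg)

lemma sum_list_antimono_mset_subseteq:
  fixes xs ys :: "'g::linordered_ab_group_add list"
  assumes sub: "mset xs \<subseteq># mset ys" and neg: "\<forall>y\<in>set ys. y < 0"
  shows "sum_list ys \<le> sum_list xs"
    and "length xs < length ys \<Longrightarrow> sum_list ys < sum_list xs"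
proof -
  obtain zs where ys: "mset ys = mset (xs @ zs)"
    using sub by (metis ex_mset mset_append mset_subset_eq_exists_conv)
  then have sum: "sum_list ys = sum_list xs + sum_list zs"
    by (metis sum_list_append sum_mset_sum_list)
  have zs_neg: "\<forall>z\<in>set zs. z < 0"
    using neg ys by (metis Un_iff set_append set_mset_mset)
  then have "sum_list zs \<le> 0" by (auto intro!: sum_list_nonpos simp: less_imp_le)
  then show "sum_list ys \<le> sum_list xs" using sum by simp
  assume "length xs < length ys"
  then have "zs \<noteq> []" using ys by (metis append.right_neutral less_irrefl size_mset)
  then have "sum_list zs < 0" using zs_neg by (rule sum_list_neg)
  then show "sum_list ys < sum_list xs" using sum by simp
qed

lemma nat_seq_has_nondecreasing_subseq:
  fixes s :: "nat \<Rightarrow> nat"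
  shows "\<exists>r::nat \<Rightarrow> nat. strict_mono r \<and> (\<forall>m n. m \<le> n \<longrightarrow> s (r m) \<le> s (r n))"
proof -
  obtain f :: "nat \<Rightarrow> nat" where f: "strict_mono f" "monoseq (\<lambda>n. s (f n))"
    using seq_monosub by blast
  show ?thesis
  proof (cases "\<forall>m n. m \<le> n \<longrightarrow> s (f m) \<le> s (f n)")
    case True
    then show ?thesis using f by blast
  next
    case False
    then have dec: "\<And>m n. m \<le> n \<Longrightarrow> s (f n) \<le> s (f m)"
      using f(2) unfolding monoseq_def by blast
    \<comment> \<open>A nonincreasing sequence of naturals is constant from the point where it attains its minimum.\<close>
    obtain k where k: "\<And>i. s (f k) \<le> s (f i)"
      using ex_has_least_nat[of "\<lambda>_. True" 0 "\<lambda>i. s (f i)"] by blast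
    have "strict_mono (\<lambda>n. f (n + k))" using f(1) by (simp add: strict_mono_def)
    moreover have "s (f (m + k)) \<le> s (f (n + k))" for m n
      using dec[of k "m + k"] k[of "n + k"] by simp
    ultimately show ?thesis by blast
  qed
qed

lemma dickson_subseq:
  fixes f :: "nat \<Rightarrow> 'a \<Rightarrow> nat"
  assumes "finite I"
  shows "\<exists>r::nat \<Rightarrow> nat. strict_mono r \<and> (\<forall>m n. m \<le> n \<longrightarrow> (\<forall>i\<in>I. f (r m) i \<le> f (r n) i))"
  using assms
proof (induction I rule: finite_induct)
  case empty
  show ?case by (rule exI[of _ id]) (simp add: strict_mono_def)
next
  case (insert a I)
  obtain r1 :: "nat \<Rightarrow> nat" where r1: "strict_mono r1"
    "\<And>m n i. m \<le> n \<Longrightarrow> i \<in> I \<Longrightarrow> f (r1 m) i \<le> f (r1 n) i"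
    using insert.IH by blast
  obtain r2 :: "nat \<Rightarrow> nat" where r2: "strict_mono r2"
    "\<And>m n. m \<le> n \<Longrightarrow> f (r1 (r2 m)) a \<le> f (r1 (r2 n)) a"
    using nat_seq_has_nondecreasing_subseq[of "\<lambda>n. f (r1 n) a"] by blast
  show ?case
  proof (intro exI conjI allI impI ballI)
    show "strict_mono (r1 \<circ> r2)" using r1(1) r2(1) by (simp add: strict_mono_def)
    fix m n :: nat and i assume "m \<le> n" "i \<in> insert a I"
    moreover have "r2 m \<le> r2 n" using r2(1) \<open>m \<le> n\<close> by (simp add: strict_mono_less_eq)
    ultimately show "f ((r1 \<circ> r2) m) i \<le> f ((r1 \<circ> r2) n) i"
      using r1(2) r2(2) by (cases "i = a") auto
  qed
qed

lemma mset_seq_has_subseteq_subseq: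
  fixes M :: "nat \<Rightarrow> 'a multiset"
  assumes "finite A" "\<And>k. set_mset (M k) \<subseteq> A"
  shows "\<exists>r::nat \<Rightarrow> nat. strict_mono r \<and> (\<forall>m n. m \<le> n \<longrightarrow> M (r m) \<subseteq># M (r n))"
proof -
  obtain r :: "nat \<Rightarrow> nat" where r: "strict_mono r"
    "\<And>m n i. m \<le> n \<Longrightarrow> i \<in> A \<Longrightarrow> count (M (r m)) i \<le> count (M (r n)) i"
    using dickson_subseq[OF assms(1), of "\<lambda>k i. count (M k) i"] by blast
  have "M (r m) \<subseteq># M (r n)" if "m \<le> n" for m n
    unfolding subseteq_mset_def
    using r(2)[OF that] assms(2)[of "r m"] by (metis count_eq_zero_iff le0 subsetD)
  then show ?thesis using r(1) by auto
qed

lemma mstar_ge_seq_antimono_subseq: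
  fixes s :: "nat \<Rightarrow> 'g::linordered_ab_group_add" and k :: "nat \<Rightarrow> nat"
  assumes ratio: "ratio_set \<alpha>" and s: "\<And>i. s i \<in> mstar_ge \<alpha> (k i)"
  shows "\<exists>(r::nat \<Rightarrow> nat) (xs::nat \<Rightarrow> 'g list). strict_mono r \<and> (\<forall>i. k i \<le> length (xs i)) \<and>
    (\<forall>n. s (r n) \<le> s (r 0)) \<and>
    (\<forall>n. length (xs (r 0)) < length (xs (r n)) \<longrightarrow> s (r n) < s (r 0))"
proof -
  have "\<forall>i. \<exists>ys. set ys \<subseteq> \<alpha> \<and> k i \<le> length ys \<and> s i = sum_list ys"
    using s unfolding mstar_ge_def by blast
  then obtain xs where xs: "\<And>i. set (xs i) \<subseteq> \<alpha>" "\<And>i. k i \<le> length (xs i)"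
    "\<And>i. s i = sum_list (xs i)"
    by (metis choice)
  have "\<exists>r::nat \<Rightarrow> nat. strict_mono r \<and> (\<forall>m n. m \<le> n \<longrightarrow> mset (xs (r m)) \<subseteq># mset (xs (r n)))"
    using ratio xs(1) unfolding ratio_set_def by (intro mset_seq_has_subseteq_subseq) auto
  then obtain r :: "nat \<Rightarrow> nat" where r: "strict_mono r"
    "\<And>m n. m \<le> n \<Longrightarrow> mset (xs (r m)) \<subseteq># mset (xs (r n))"
    by blast
  have neg: "\<forall>y\<in>set (xs (r n)). y < 0" for n
    using ratio xs(1) unfolding ratio_set_def by blast
  note antimono = sum_list_antimono_mset_subseteq[OF r(2)[OF le0] neg]
  have "\<forall>n. s (r n) \<le> s (r 0)" using antimono(1) by (simp add: xs(3))
  moreover have "\<forall>n. length (xs (r 0)) < length (xs (r n)) \<longrightarrow> s (r n) < s (r 0)"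
    using antimono(2) by (simp add: xs(3))
  moreover have "\<forall>i. k i \<le> length (xs i)" using xs(2) by blast
  ultimately show ?thesis using r(1) by blast
qed

lemma ex_not_in_mstar_ge:
  fixes x :: "'g::linordered_ab_group_add"
  assumes ratio: "ratio_set \<alpha>"
  shows "\<exists>k. x \<notin> mstar_ge \<alpha> k"
proof (rule ccontr)
  assume "\<nexists>k. x \<notin> mstar_ge \<alpha> k"
  then have mem: "\<And>i. x \<in> mstar_ge \<alpha> i" by blast
  obtain r :: "nat \<Rightarrow> nat" and xs :: "nat \<Rightarrow> 'g list"
    where r: "strict_mono r" "\<forall>i. i \<le> length (xs i)"
      "\<forall>n. length (xs (r 0)) < length (xs (r n)) \<longrightarrow> x < x"
    using mstar_ge_seq_antimono_subseq[where s = "\<lambda>_. x" and k = "\<lambda>i. i", OF ratio mem] by blast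
  \<comment> \<open>Along the subsequence the representations of x grow longer, forcing x < x.\<close>
  have "Suc (length (xs (r 0))) \<le> length (xs (r (Suc (length (xs (r 0))))))"
    using r(1) r(2) strict_mono_imp_increasing le_trans by blast
  then show False using r(3) Suc_le_lessD by blast
qed

lemma mstar_subset_has_greatest:
  assumes ratio: "ratio_set \<alpha>" and "Q \<subseteq> mstar \<alpha>" "Q \<noteq> {}"
  shows "\<exists>z\<in>Q. \<forall>y\<in>Q. y \<le> z"
proof (rule ccontr)
  assume "\<not> ?thesis"
  then obtain g where g: "\<And>z. z \<in> Q \<Longrightarrow> g z \<in> Q \<and> z < g z"
    by (metis not_le_imp_less)
  obtain z0 where "z0 \<in> Q" using \<open>Q \<noteq> {}\<close> by blast
  define f where "f i = (g ^^ i) z0" for i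
  have "f i \<in> Q" for i by (induction i) (simp_all add: f_def \<open>z0 \<in> Q\<close> g)
  then have f: "strict_mono f" "\<And>i. f i \<in> mstar_ge \<alpha> 0"
    using g \<open>Q \<subseteq> mstar \<alpha>\<close> by (auto simp: strict_mono_Suc_iff f_def mstar_eq_mstar_ge)
  then obtain r :: "nat \<Rightarrow> nat" where "strict_mono r" "f (r 1) \<le> f (r 0)"
    using mstar_ge_seq_antimono_subseq[OF ratio, where s = f and k = "\<lambda>_. 0"] by blast
  then show False using strict_mono_less_eq[OF f(1)] strict_mono_less_eq[of r] by simp
qed

definition cone :: "'g::linordered_ab_group_add set \<Rightarrow> nat \<Rightarrow> 'g \<Rightarrow> 'g set" where
  "cone \<alpha> k c = (\<lambda>s. c + s) ` mstar_ge \<alpha> k"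

lemma mem_cone_iff: "x \<in> cone \<alpha> k c \<longleftrightarrow> x - c \<in> mstar_ge \<alpha> k"
  unfolding cone_def by (auto intro: image_eqI[of x _ "x - c"])

lemma cone_antimono: "k \<le> l \<Longrightarrow> cone \<alpha> l c \<subseteq> cone \<alpha> k c"
  unfolding cone_def using mstar_ge_antimono by blast

lemma cone_trans: "y \<in> cone \<alpha> k c \<Longrightarrow> x \<in> cone \<alpha> l y \<Longrightarrow> x \<in> cone \<alpha> (k + l) c"
  unfolding mem_cone_iff using mstar_ge_add by fastforce

lemma cone_le: "ratio_set \<alpha> \<Longrightarrow> x \<in> cone \<alpha> k c \<Longrightarrow> x \<le> c"
  unfolding mem_cone_iff using mstar_ge_nonpos by fastforce

lemma cone_less: "ratio_set \<alpha> \<Longrightarrow> x \<in> cone \<alpha> k c \<Longrightarrow> 0 < k \<Longrightarrow> x < c"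
  unfolding mem_cone_iff using mstar_ge_neg by fastforce

lemma mono_prec_iff_cone: "mono_prec \<alpha> a b \<longleftrightarrow> a \<in> cone \<alpha> 1 b"
  by (simp add: mono_prec_def mplus_eq_mstar_ge mem_cone_iff)

lemma ex_not_in_cone: "ratio_set \<alpha> \<Longrightarrow> \<exists>k. x \<notin> cone \<alpha> k c"
  unfolding mem_cone_iff by (rule ex_not_in_mstar_ge)

lemma supp_diff_subset: "supp (A - B) \<subseteq> supp A \<union> supp B"
  unfolding supp_def by auto

lemma series_eq_0_if_supp_in_all_cones:
  assumes "ratio_set \<alpha>" "\<And>k. supp S \<subseteq> cone \<alpha> k c"
  shows "S = (\<lambda>_. 0)"
proof
  fix x
  obtain k where "x \<notin> cone \<alpha> k c" using ex_not_in_cone[OF assms(1)] by blast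
  then show "S x = 0" using assms(2)[of k] unfolding supp_def by auto
qed

lemma supp_in_cone_if_ser_prec:
  assumes "ser_prec \<alpha> A B" "supp B \<subseteq> cone \<alpha> k c"
  shows "supp A \<subseteq> cone \<alpha> (Suc k) c"
  using assms cone_trans[where l = 1] unfolding ser_prec_def mono_prec_iff_cone by fastforce

lemma mag_eqI: "c \<in> supp S \<Longrightarrow> (\<And>x. x \<in> supp S \<Longrightarrow> x \<le> c) \<Longrightarrow> mag S = c"
  unfolding mag_def by (rule Greatest_equality)

lemma witnesses_iff_supp_in_cone: "witnesses \<alpha> S \<longleftrightarrow> S \<noteq> (\<lambda>_. 0) \<and> supp S \<subseteq> cone \<alpha> 0 (mag S)"
  unfolding witnesses_def cone_def mstar_eq_mstar_ge by blast

lemma mag_in_supp: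
  assumes ratio: "ratio_set \<alpha>" and wit: "witnesses \<alpha> S"
  shows "mag S \<in> supp S"
proof -
  have "(\<lambda>x. x - mag S) ` supp S \<subseteq> mstar \<alpha>" "supp S \<noteq> {}"
    using wit unfolding witnesses_iff_supp_in_cone supp_def
    by (auto simp: subset_iff mem_cone_iff mstar_eq_mstar_ge)
  then obtain z where "z \<in> (\<lambda>x. x - mag S) ` supp S" "\<forall>y\<in>(\<lambda>x. x - mag S) ` supp S. y \<le> z"
    using mstar_subset_has_greatest[OF ratio] by blast
  then obtain c where "c \<in> supp S" "\<forall>x\<in>supp S. x - mag S \<le> c - mag S" by auto
  then show ?thesis using mag_eqI[of c S] by simp
qed

lemma witnessesI:
  assumes "ratio_set \<alpha>" "c \<in> supp S" "supp S \<subseteq> cone \<alpha> 0 c"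
  shows "witnesses \<alpha> S"
proof -
  have "mag S = c" using assms cone_le by (blast intro: mag_eqI)
  moreover have "S \<noteq> (\<lambda>_. 0)" using assms(2) by (auto simp: supp_def)
  ultimately show ?thesis using assms(3) by (simp add: witnesses_iff_supp_in_cone)
qed

lemma grid_based_if_supp_in_two_cones:
  assumes ratio: "ratio_set \<alpha>" and supp: "supp T \<subseteq> cone \<alpha> 0 a \<union> cone \<alpha> 0 b"
  shows "grid_based T"
proof -
  define c where "c = max a b"
  \<comment> \<open>The offset of the lower cone from the upper one becomes one more ratio.\<close>
  define \<mu> where "\<mu> = \<alpha> \<union> ({min a b - c} - {0})"
  have \<mu>: "finite \<mu>" "\<forall>x\<in>\<mu>. x < 0"
    using ratio unfolding \<mu>_def c_def ratio_set_def by (auto simp: min_def max_def)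
  have "x - c \<in> mstar \<mu>" if p: "p \<in> {a, b}" and x: "x \<in> cone \<alpha> 0 p" for x p
  proof -
    obtain xs where xs: "set xs \<subseteq> \<alpha>" "x - p = sum_list xs"
      using x unfolding mem_cone_iff mstar_ge_def by blast
    show ?thesis
    proof (cases "p = c")
      case True
      then show ?thesis using xs unfolding mstar_def \<mu>_def by auto
    next
      case False
      then have "set ((p - c) # xs) \<subseteq> \<mu>" "x - c = sum_list ((p - c) # xs)"
        using xs p unfolding \<mu>_def c_def by (auto simp: min_def max_def algebra_simps)
      then show ?thesis unfolding mstar_def by blast
    qed
  qed
  then have "supp T \<subseteq> {c + s | s. s \<in> mstar \<mu>}"
    using supp by (force intro: exI[of _ "_ - c"])
  then show ?thesis unfolding grid_based_def using \<mu> by blast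
qed

lemma supp_in_cone_if_ser_prec_chain:
  assumes wit: "\<And>j. witnesses \<alpha> (D j)" and prec: "\<And>j. ser_prec \<alpha> (D (Suc j)) (D j)"
    and "j \<le> i"
  shows "supp (D i) \<subseteq> cone \<alpha> (i - j) (mag (D j))"
  using \<open>j \<le> i\<close>
proof (induction i rule: dec_induct)
  case base
  show ?case using wit[of j] by (simp add: witnesses_iff_supp_in_cone)
next
  case (step i)
  then show ?case using supp_in_cone_if_ser_prec[OF prec[of i]] by (simp add: Suc_diff_le)
qed

lemma ex_pointwise_limit_if_eventually_const:
  assumes "\<forall>g. \<exists>n. \<forall>i\<ge>n. X (Suc i) g = X i g"
  shows "\<exists>T. \<forall>g. \<exists>n. \<forall>i\<ge>n. X i g = T g"
proof -
  define N where "N g = (SOME n. \<forall>i\<ge>n. X (Suc i) g = X i g)" for g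
  have N: "X (Suc i) g = X i g" if "N g \<le> i" for g i
    using someI_ex[OF assms[rule_format, of g]] that unfolding N_def by blast
  have "X i g = X (N g) g" if "N g \<le> i" for g i
    using that by (induction i rule: dec_induct) (simp_all add: N)
  then show ?thesis by (intro exI[of _ "\<lambda>g. X (N g) g"]) blast
qed

lemma supp_diff_pointwise_limit_subset:
  assumes lim: "\<forall>g. \<exists>n. \<forall>i\<ge>n. X i g = T g"
  shows "supp (T - X j) \<subseteq> (\<Union>i\<in>{j..}. supp (X (Suc i) - X i))"
proof
  fix g assume "g \<in> supp (T - X j)"
  moreover obtain n where "\<forall>i\<ge>n. X i g = T g" using lim by blast
  ultimately have "j \<le> max n j" "X (max n j) g \<noteq> X j g" by (simp_all add: supp_def)
  moreover have "X (max n j) g = X j g" if "\<forall>i\<in>{j..<max n j}. X (Suc i) g = X i g"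
    by (rule dec_induct[OF \<open>j \<le> max n j\<close>]) (use that in auto)
  ultimately obtain i where "i \<in> {j..<max n j}" "X (Suc i) g \<noteq> X i g" by blast
  then show "g \<in> (\<Union>i\<in>{j..}. supp (X (Suc i) - X i))" by (auto simp: supp_def)
qed

lemma geom_conv_limit_of_ser_prec_chain:
  fixes X :: "nat \<Rightarrow> 'g::linordered_ab_group_add series"
  assumes ratio: "ratio_set \<alpha>"
    and wit: "\<And>j. witnesses \<alpha> (X (Suc j) - X j)"
    and prec: "\<And>j. ser_prec \<alpha> (X (Suc (Suc j)) - X (Suc j)) (X (Suc j) - X j)"
  shows "\<exists>T. geom_conv \<alpha> X T \<and> (\<forall>k. supp (T - X k) \<subseteq> cone \<alpha> k (mag (X 1 - X 0)))"
proof -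
  define D where "D j = X (Suc j) - X j" for j
  define m where "m j = mag (D j)" for j
  have chain: "supp (D i) \<subseteq> cone \<alpha> (i - j) (m j)" if "j \<le> i" for i j
    unfolding m_def using supp_in_cone_if_ser_prec_chain[of \<alpha> D] wit prec that
    unfolding D_def by blast
  have "\<forall>g. \<exists>n. \<forall>i\<ge>n. X (Suc i) g = X i g"
  proof
    fix g
    obtain k where k: "g \<notin> cone \<alpha> k (m 0)" using ex_not_in_cone[OF ratio] by blast
    have "X (Suc i) g = X i g" if "k \<le> i" for i
      using chain[of 0 i] cone_antimono[OF that] k by (auto simp: D_def supp_def)
    then show "\<exists>n. \<forall>i\<ge>n. X (Suc i) g = X i g" by blast
  qed
  then obtain T where lim: "\<forall>g. \<exists>n. \<forall>i\<ge>n. X i g = T g"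
    using ex_pointwise_limit_if_eventually_const by blast
  have tail: "supp (T - X l) \<subseteq> cone \<alpha> (l - j) (m j)" if "j \<le> l" for j l
  proof
    fix g assume "g \<in> supp (T - X l)"
    then obtain i where "l \<le> i" "g \<in> supp (D i)"
      using supp_diff_pointwise_limit_subset[OF lim, of l] unfolding D_def by blast
    moreover have "cone \<alpha> (i - j) (m j) \<subseteq> cone \<alpha> (l - j) (m j)"
      using \<open>l \<le> i\<close> by (intro cone_antimono) simp
    ultimately show "g \<in> cone \<alpha> (l - j) (m j)" using chain[of j i] that by auto
  qed
  \<comment> \<open>T - X j = D j + (T - X (Suc j)), and the second summand lives strictly below m j.\<close>
  have m_in: "m j \<in> supp (T - X j)" for j
  proof -
    have "m j \<in> supp (D j)" unfolding m_def D_def using mag_in_supp[OF ratio wit] .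
    moreover have "m j \<notin> supp (T - X (Suc j))"
      using tail[of j "Suc j"] cone_less[OF ratio] by fastforce
    ultimately show ?thesis by (simp add: supp_def D_def)
  qed
  have "geom_conv \<alpha> X T"
    unfolding geom_conv_def ser_prec_def mono_prec_iff_cone
    using witnessesI[OF ratio m_in] tail[of j j for j] tail[of j "Suc j" for j] m_in by fastforce
  then show ?thesis using tail[of 0] by (auto simp: m_def D_def)
qed

lemma fixed_point_if_supp_in_all_cones:
  assumes ratio: "ratio_set \<alpha>"
    and prec: "\<And>k. ser_prec \<alpha> (\<Phi> T - X (Suc k)) (T - X k)"
    and tail: "\<And>k. supp (T - X k) \<subseteq> cone \<alpha> k c"
  shows "\<Phi> T = T"
proof -
  have "\<Phi> T - T = (\<lambda>_. 0)"
  proof (rule series_eq_0_if_supp_in_all_cones[OF ratio])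
    fix k
    have "\<Phi> T - T = (\<Phi> T - X (Suc k)) - (T - X (Suc k))" by (simp add: fun_eq_iff)
    moreover have "supp (\<Phi> T - X (Suc k)) \<subseteq> cone \<alpha> (Suc k) c"
      using supp_in_cone_if_ser_prec[OF prec tail] .
    ultimately show "supp (\<Phi> T - T) \<subseteq> cone \<alpha> k c"
      using supp_diff_subset tail[of "Suc k"] cone_antimono[of k "Suc k"] by fastforce
  qed
  then show ?thesis by (simp add: fun_eq_iff)
qed

theorem proposition6p1:
  fixes \<A> :: "('g::linordered_ab_group_add) series set"
    and \<Phi> :: "'g series \<Rightarrow> 'g series"
    and \<alpha> :: "'g set"
  assumes A_sub: "\<forall>T\<in>\<A>. grid_based T"
    and Phi_maps: "\<forall>S\<in>\<A>. \<Phi> S \<in> \<A>"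
    and ratio: "ratio_set \<alpha>"
    and a: "\<And>S. S \<in> \<A> \<Longrightarrow> witnesses \<alpha> S \<Longrightarrow> witnesses \<alpha> (\<Phi> S)"
    and b: "\<And>S T. S \<in> \<A> \<Longrightarrow> T \<in> \<A> \<Longrightarrow> witnesses \<alpha> (S - T) \<Longrightarrow>
              witnesses \<alpha> (\<Phi> S - \<Phi> T) \<and> ser_prec \<alpha> (\<Phi> S - \<Phi> T) (S - T)"
    and c: "\<And>Ts T. (\<forall>j. Ts j \<in> \<A>) \<Longrightarrow> grid_based T \<Longrightarrow> geom_conv \<alpha> Ts T \<Longrightarrow> T \<in> \<A>"
    and d: "\<exists>T0\<in>\<A>. witnesses \<alpha> T0 \<and> witnesses \<alpha> (\<Phi> T0 - T0)"
  shows "\<exists>S\<in>\<A>. S = \<Phi> S"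
proof -
  obtain T0 where T0: "T0 \<in> \<A>" "witnesses \<alpha> T0" "witnesses \<alpha> (\<Phi> T0 - T0)"
    using d by blast
  define X where "X j = (\<Phi> ^^ j) T0" for j
  have X_0: "X 0 = T0" and X_Suc: "X (Suc j) = \<Phi> (X j)" for j by (simp_all add: X_def)
  have X_in: "X j \<in> \<A>" for j by (induction j) (simp_all add: X_0 X_Suc T0(1) Phi_maps)
  have wit: "witnesses \<alpha> (X (Suc j) - X j)" for j
  proof (induction j)
    case 0
    show ?case using T0(3) by (simp only: X_0 X_Suc)
  next
    case (Suc j)
    show ?case using b[OF X_in X_in Suc] by (simp only: X_Suc)
  qed
  have prec: "ser_prec \<alpha> (X (Suc (Suc j)) - X (Suc j)) (X (Suc j) - X j)" for j
    using b[OF X_in X_in wit] by (simp only: X_Suc)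
  obtain T where conv: "geom_conv \<alpha> X T"
    and tail: "\<forall>k. supp (T - X k) \<subseteq> cone \<alpha> k (mag (X 1 - X 0))"
    using geom_conv_limit_of_ser_prec_chain[where X = X, OF ratio wit prec] by blast
  have "supp T \<subseteq> supp T0 \<union> supp (T - X 0)" by (auto simp: supp_def X_0)
  then have "grid_based T"
    using tail[rule_format, of 0] T0(2) unfolding witnesses_iff_supp_in_cone
    by (blast intro: grid_based_if_supp_in_two_cones[OF ratio])
  then have T_in: "T \<in> \<A>" using c X_in conv by blast
  have "ser_prec \<alpha> (\<Phi> T - X (Suc k)) (T - X k)" for k
    using b[OF T_in X_in] conv unfolding geom_conv_def X_Suc by blast
  then have "\<Phi> T = T" using fixed_point_if_supp_in_all_cones[OF ratio] tail by blast
  then show ?thesis using T_in by metis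
qed

end
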